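(* Let $\alpha\in(0,\tfrac12)$, $K>0$ and $\mu\in\widetilde{\mathcal C}_{\mathcal M}(0,T)$, and let $X(t;0,z,\Omega)$ be the (forward-unique) flow of $\frac{dX}{dt}=\mathcal V[\mu_t](X)$. Then there exists $L=L(\alpha,K,\mu)$ such that $$d\big(X(t;0,(z_1,\Omega_1)),X(t;0,(z_2,\Omega_2))\big)\le d((z_1,\Omega_1),(z_2,\Omega_2))\,e^{Lt}$$ for all $(z_1,\Omega_1),(z_2,\Omega_2)\in\mathbb T\times\mathbb R$ and $t\in[0,T]$.
   Context: $\mathbb T$ is the unit circle identified with $(-\pi,\pi]$ via $z=e^{i\theta}$; $|\theta|_o$ = absolute value of the representative of $\theta$ mod $2\pi$ in $(-\pi,\pi]$; $d((e^{i\theta_1},\Omega_1),(e^{i\theta_2},\Omega_2))=(|\theta_1-\theta_2|_o^2+(\Omega_1-\Omega_2)^2)^{1/2}$. Kernel $h(\theta)=\sin\theta/|\theta|_o^{2\alpha}$ ($\theta\notin2\pi\mathbb Z$), $h=0$ on $2\pi\mathbb Z$. $\mathcal P[\mu](\theta,\Omega)=\Omega-K\int h(\theta-\theta')\,d\mu(\theta',\Omega')$, $\mathcal V[\mu](z,\Omega)=(\mathcal P[\mu](z,\Omega)\,iz,0)$. $\widetilde{\mathcal C}_{\mathcal M}(0,T)$: $\mu\in L^\infty(0,T;\mathcal M(\mathbb T\times\mathbb R))$ with $t\mapsto\int\varphi\,d\mu_t$ continuous for all bounded continuous $\varphi$. For such $\mu$, the characteristic system $\frac{dX}{dt}=\mathcal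 V[\mu_t](X)$, $X(0)=x$, has a global $C^1$ solution that is unique forward in time; $X(t;0,x)$ denotes it. *)

theory Defs
  imports "HOL-Analysis.Analysis"
begin

text \<open>Points of T x R are represented in angle coordinates (theta, Omega) :: real * real,
  theta being (a lift of) the angle of z = exp(i theta).\<close>

definition ang_rep :: "real \<Rightarrow> real" where
  "ang_rep \<theta> = \<theta> - 2 * pi * of_int (ceiling ((\<theta> - pi) / (2 * pi)))"

definition ang_abs :: "real \<Rightarrow> real" where
  "ang_abs \<theta> = \<bar>ang_rep \<theta>\<bar>"

definition dTR :: "real \<times> real \<Rightarrow> real \<times> real \<Rightarrow> real" where
  "dTR p q = sqrt ((ang_abs (fst p - fst q))\<^sup>2 + (snd p - snd q)\<^sup>2)"

definition hker :: "real \<Rightarrow> real \<Rightarrow> real" where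
  "hker \<alpha> \<theta> = (if ang_rep \<theta> = 0 then 0 else sin \<theta> / (ang_abs \<theta> powr (2 * \<alpha>)))"

definition Pfield :: "real \<Rightarrow> real \<Rightarrow> (real \<times> real) measure \<Rightarrow> real \<times> real \<Rightarrow> real" where
  "Pfield \<alpha> K \<mu> x = snd x - K * (\<integral>y. hker \<alpha> (fst x - fst y) \<partial>\<mu>)"

text \<open>Velocity field V[mu] in angle coordinates: d theta/dt = P[mu], d Omega/dt = 0
  (this is (P[mu] i z, 0) since d/dt e^{i theta} = i e^{i theta} theta').\<close>
definition Vfield :: "real \<Rightarrow> real \<Rightarrow> (real \<times> real) measure \<Rightarrow> real \<times> real \<Rightarrow> real \<times> real" where
  "Vfield \<alpha> K \<mu> x = (Pfield \<alpha> K \<mu> x, 0)"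

text \<open>A finite (nonnegative) Borel measure on T x R, realised on R x R and
  concentrated on (-pi, pi] x R.\<close>
definition meas_TR :: "(real \<times> real) measure \<Rightarrow> bool" where
  "meas_TR \<mu> \<longleftrightarrow> sets \<mu> = sets borel \<and> finite_measure \<mu> \<and>
     emeasure \<mu> (UNIV - {-pi<..pi} \<times> UNIV) = 0"

text \<open>Bounded continuous test functions on T x R, i.e. bounded continuous functions on
  R x R that are 2 pi-periodic in the angle variable.\<close>
definition test_fun_TR :: "(real \<times> real \<Rightarrow> real) \<Rightarrow> bool" where
  "test_fun_TR \<phi> \<longleftrightarrow> continuous_on UNIV \<phi> \<and> bounded (range \<phi>) \<and>
     (\<forall>\<theta> \<Omega>. \<phi> (\<theta> + 2 * pi, \<Omega>) = \<phi> (\<theta>, \<Omega>))"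

definition CM_tilde :: "real \<Rightarrow> (real \<Rightarrow> (real \<times> real) measure) \<Rightarrow> bool" where
  "CM_tilde T \<mu> \<longleftrightarrow>
     (\<forall>t\<in>{0..T}. meas_TR (\<mu> t)) \<and>
     (\<exists>M. \<forall>t\<in>{0..T}. measure (\<mu> t) UNIV \<le> M) \<and>
     (\<forall>\<phi>. test_fun_TR \<phi> \<longrightarrow> continuous_on {0..T} (\<lambda>t. \<integral>y. \<phi> y \<partial>(\<mu> t)))"

definition is_flow :: "real \<Rightarrow> real \<Rightarrow> real \<Rightarrow> (real \<Rightarrow> (real \<times> real) measure)
    \<Rightarrow> (real \<Rightarrow> real \<times> real \<Rightarrow> real \<times> real) \<Rightarrow> bool" where
  "is_flow \<alpha> K T \<mu> X \<longleftrightarrow>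
     (\<forall>x. X 0 x = x \<and>
        (\<forall>t\<in>{0..T}. ((\<lambda>s. X s x) has_vector_derivative Vfield \<alpha> K (\<mu> t) (X t x)) (at t within {0..T})))"

end

theory Submission
  imports Defs
begin

(* The kernel h is one-sided Lipschitz: away from the zeros of sin it is differentiable with
   h' = |theta|_o^(-2 alpha) (cos theta - 2 alpha |sin theta| / |theta|_o) >= -8, and at those zeros it is
   still continuous because alpha < 1/2.  Integrating against mu_t, the velocity field satisfies
   2 r (P(x1) - P(x2)) <= (1 + 16 K M) (r^2 + (Omega1 - Omega2)^2), where r is any lift of the angular
   gap and M bounds the total mass.  Since Omega is conserved along the flow, Gronwall applied to
   r^2 + (Omega1 - Omega2)^2, with the lift chosen in (-pi, pi] at time 0, gives the estimate
   with L = (1 + 16 K M) / 2. *)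

section \<open>Angles modulo 2 pi\<close>

lemma ang_rep_bounds: "-pi < ang_rep x \<and> ang_rep x \<le> pi"
proof -
  define c where "c = ceiling ((x - pi) / (2 * pi))"
  have "(x - pi) / (2*pi) \<le> c" "c < (x - pi) / (2*pi) + 1" unfolding c_def by linarith+
  hence "x - pi \<le> 2*pi*c" "2*pi*c < x - pi + 2*pi" by (auto simp: field_simps)
  thus ?thesis unfolding ang_rep_def c_def[symmetric] by linarith
qed

lemma ang_rep_shift: "\<exists>m::int. ang_rep x = x + 2 * pi * of_int m"
  unfolding ang_rep_def by (intro exI[of _ "- ceiling ((x - pi) / (2 * pi))"]) simp

lemma ang_abs_eq_arccos_cos: "ang_abs x = arccos (cos x)"
proof -
  obtain m :: int where m: "ang_rep x = x + 2 * pi * of_int m" using ang_rep_shift by blast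
  have "cos x = cos \<bar>ang_rep x\<bar>" unfolding m by (simp add: cos_add)
  moreover have "arccos (cos \<bar>ang_rep x\<bar>) = \<bar>ang_rep x\<bar>"
    using ang_rep_bounds[of x] by (intro arccos_cos) auto
  ultimately show ?thesis unfolding ang_abs_def by simp
qed

lemma ang_abs_bounds: "0 \<le> ang_abs x" "ang_abs x \<le> pi"
  unfolding ang_abs_eq_arccos_cos by (simp_all add: arccos_lbound arccos_ubound)

lemma cos_ang_abs: "cos (ang_abs x) = cos x"
  unfolding ang_abs_eq_arccos_cos by (simp add: cos_arccos)

lemma sin_ang_abs: "sin (ang_abs x) = \<bar>sin x\<bar>"
  unfolding ang_abs_eq_arccos_cos by (simp add: sin_arccos sin_squared_eq[symmetric])

lemma abs_sin_le_ang_abs: "\<bar>sin x\<bar> \<le> ang_abs x"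
  using sin_x_le_x[OF ang_abs_bounds(1)] by (simp add: sin_ang_abs)

lemma ang_abs_le_abs: "ang_abs x \<le> \<bar>x\<bar>"
proof (cases "\<bar>x\<bar> \<le> pi")
  case True
  hence "arccos (cos \<bar>x\<bar>) = \<bar>x\<bar>" by (intro arccos_cos) auto
  thus ?thesis unfolding ang_abs_eq_arccos_cos by simp
next
  case False
  thus ?thesis using ang_abs_bounds(2)[of x] by linarith
qed

lemma ang_abs_periodic: "ang_abs (x + 2 * pi * of_int m) = ang_abs x"
  unfolding ang_abs_eq_arccos_cos by (simp add: cos_add)

lemma continuous_ang_abs: "continuous_on UNIV ang_abs"
  unfolding ang_abs_eq_arccos_cos[abs_def] by (intro continuous_intros) auto

lemma has_real_derivative_ang_abs:
  assumes "sin x \<noteq> 0"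
  shows "(ang_abs has_real_derivative sgn (sin x)) (at x)"
proof -
  have "(sin x)\<^sup>2 > 0" using assms by simp
  hence "(cos x)\<^sup>2 < 1" using sin_cos_squared_add[of x] by linarith
  hence "-1 < cos x" "cos x < 1" by (simp_all add: abs_square_less_1 abs_less_iff)
  from DERIV_chain2[OF DERIV_arccos[OF this] DERIV_cos]
  have "((\<lambda>x. arccos (cos x)) has_real_derivative inverse (- \<bar>sin x\<bar>) * - sin x) (at x)"
    by (simp add: sin_squared_eq[symmetric])
  moreover have "inverse \<bar>sin x\<bar> * sin x = sgn (sin x)"
    using assms by (simp add: sgn_if)
  ultimately show ?thesis by (simp add: ang_abs_eq_arccos_cos[abs_def])
qed

section \<open>The kernel\<close>

text \<open>At multiples of \<open>2 * pi\<close> both sides vanish, since \<open>0 powr a = 0\<close>.\<close>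
lemma hker_eq: "hker \<alpha> x = sin x * ang_abs x powr (- 2 * \<alpha>)"
  unfolding hker_def ang_abs_def by (simp add: powr_minus divide_inverse)

lemma hker_periodic: "hker \<alpha> (x + 2 * pi * of_int m) = hker \<alpha> x"
  unfolding hker_eq ang_abs_periodic by (simp add: sin_add)

lemma abs_hker_le: "\<bar>hker \<alpha> x\<bar> \<le> ang_abs x powr (1 - 2 * \<alpha>)"
proof (cases "ang_abs x = 0")
  case True
  thus ?thesis by (simp add: hker_eq)
next
  case False
  hence A: "ang_abs x > 0" using ang_abs_bounds(1)[of x] by simp
  have "\<bar>hker \<alpha> x\<bar> = \<bar>sin x\<bar> * ang_abs x powr (- 2 * \<alpha>)" by (simp add: hker_eq abs_mult)
  also have "\<dots> \<le> ang_abs x * ang_abs x powr (- 2 * \<alpha>)"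
    using abs_sin_le_ang_abs by (intro mult_right_mono) auto
  also have "\<dots> = ang_abs x powr 1 * ang_abs x powr (- 2 * \<alpha>)"
    using A by simp
  also have "\<dots> = ang_abs x powr (1 + - 2 * \<alpha>)"
    by (simp only: powr_add)
  finally show ?thesis by simp
qed

lemma abs_hker_le_4:
  assumes "0 \<le> \<alpha>" "\<alpha> \<le> 1/2"
  shows "\<bar>hker \<alpha> x\<bar> \<le> 4"
proof -
  have "ang_abs x powr (1 - 2 * \<alpha>) \<le> 4 powr (1 - 2 * \<alpha>)"
    using ang_abs_bounds[of x] pi_less_4 assms by (intro powr_mono2) auto
  also have "\<dots> \<le> 4" using assms powr_mono[of "1 - 2 * \<alpha>" 1 4] by simp
  finally show ?thesis using abs_hker_le[of \<alpha> x] by linarith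
qed

lemma continuous_hker:
  assumes "\<alpha> < 1/2"
  shows "continuous_on UNIV (hker \<alpha>)"
proof -
  have "isCont (hker \<alpha>) x" for x
  proof (cases "ang_abs x = 0")
    case False
    hence "ang_abs x > 0" using ang_abs_bounds(1)[of x] by simp
    moreover have "isCont ang_abs x"
      using continuous_ang_abs by (simp add: continuous_on_eq_continuous_at)
    ultimately have "isCont (\<lambda>x. sin x * ang_abs x powr (- 2 * \<alpha>)) x"
      by (intro continuous_intros) auto
    thus ?thesis by (simp add: hker_eq[abs_def])
  next
    case True
    have "(ang_abs \<longlongrightarrow> 0) (at x)"
      using continuous_ang_abs True by (metis continuous_on_eq_continuous_at isCont_def open_UNIV UNIV_I)
    hence "((\<lambda>y. ang_abs y powr (1 - 2 * \<alpha>)) \<longlongrightarrow> 0) (at x)"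
      by (rule tendsto_zero_powrI[OF _ tendsto_const]) (use assms ang_abs_bounds in auto)
    hence "(hker \<alpha> \<longlongrightarrow> 0) (at x)"
      by (rule Lim_null_comparison[rotated]) (use abs_hker_le in auto)
    thus ?thesis using True by (simp add: isCont_def hker_eq)
  qed
  thus ?thesis by (simp add: continuous_at_imp_continuous_on)
qed

lemma has_real_derivative_hker:
  assumes "sin x \<noteq> 0"
  shows "(hker \<alpha> has_real_derivative
           ang_abs x powr (- 2 * \<alpha>) * (cos x - 2 * \<alpha> * \<bar>sin x\<bar> / ang_abs x)) (at x)"
proof -
  have A: "ang_abs x > 0" using assms abs_sin_le_ang_abs[of x] by simp
  from DERIV_mult[OF DERIV_sin DERIV_fun_powr[OF has_real_derivative_ang_abs[OF assms] A]]
  have D: "((\<lambda>x. sin x * ang_abs x powr (- 2 * \<alpha>)) has_real_derivative cos x * ang_abs x powr (- 2 * \<alpha>)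
      + - 2 * \<alpha> * ang_abs x powr (- 2 * \<alpha> - of_nat 1) * sgn (sin x) * sin x) (at x)" .
  have "ang_abs x powr (- 2 * \<alpha> - 1) = ang_abs x powr (- 2 * \<alpha>) / ang_abs x"
    using A by (simp add: powr_diff)
  moreover have "sgn (sin x) * sin x = \<bar>sin x\<bar>" by (simp add: sgn_mult_abs abs_sgn)
  ultimately have "cos x * ang_abs x powr (- 2 * \<alpha>)
      + - 2 * \<alpha> * ang_abs x powr (- 2 * \<alpha> - of_nat 1) * sgn (sin x) * sin x
      = ang_abs x powr (- 2 * \<alpha>) * (cos x - 2 * \<alpha> * \<bar>sin x\<bar> / ang_abs x)"
    by (simp add: algebra_simps)
  with D show ?thesis unfolding hker_eq[abs_def] by simp
qed

lemma cos_ge_one_minus_square_half: "1 - x\<^sup>2 / 2 \<le> cos (x :: real)"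
proof -
  have "\<bar>sin (x/2)\<bar> \<le> \<bar>x/2\<bar>" by (rule abs_sin_x_le_abs_x)
  hence "(sin (x/2))\<^sup>2 \<le> (x/2)\<^sup>2" by (metis abs_ge_zero power2_abs power_mono)
  moreover have "cos x = 1 - 2 * (sin (x/2))\<^sup>2" using cos_double_sin[of "x/2"] by simp
  ultimately show ?thesis by (simp add: power_divide)
qed

lemma hker_derivative_ge:
  assumes "0 \<le> \<alpha>" "\<alpha> \<le> 1/2" "sin x \<noteq> 0"
  shows "-8 \<le> ang_abs x powr (- 2 * \<alpha>) * (cos x - 2 * \<alpha> * \<bar>sin x\<bar> / ang_abs x)"
proof -
  define A where "A = ang_abs x"
  have A: "0 < A" "A \<le> pi" using assms abs_sin_le_ang_abs[of x] ang_abs_bounds[of x] by (auto simp: A_def)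
  have "\<bar>sin x\<bar> / A \<le> 1" using abs_sin_le_ang_abs[of x] A by (simp add: A_def)
  hence "cos x - 2 * \<alpha> \<le> cos x - 2 * \<alpha> * \<bar>sin x\<bar> / A"
    using assms(1) mult_left_mono[of "\<bar>sin x\<bar> / A" 1 "2 * \<alpha>"] by simp
  moreover have "- A\<^sup>2 / 2 \<le> cos x - 2 * \<alpha>"
    using cos_ge_one_minus_square_half[of A] assms(2) by (simp add: A_def cos_ang_abs)
  ultimately have lower: "A powr (- 2 * \<alpha>) * (- A\<^sup>2 / 2)
      \<le> A powr (- 2 * \<alpha>) * (cos x - 2 * \<alpha> * \<bar>sin x\<bar> / A)"
    by (intro mult_left_mono) auto
  have "A powr (2 - 2 * \<alpha>) \<le> 4 powr (2 - 2 * \<alpha>)"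
    using A pi_less_4 assms by (intro powr_mono2) auto
  also have "\<dots> \<le> 4 powr 2" using assms by (intro powr_mono) auto
  finally have "-8 \<le> - (A powr (2 - 2 * \<alpha>)) / 2" by simp
  also have "A powr (2 - 2 * \<alpha>) = A powr (- 2 * \<alpha>) * A powr 2"
    by (simp add: powr_add[symmetric])
  also have "- (A powr (- 2 * \<alpha>) * A powr 2) / 2 = A powr (- 2 * \<alpha>) * (- A\<^sup>2 / 2)"
    using A by (simp add: powr_numeral)
  finally show ?thesis using lower by (simp add: A_def)
qed

lemma hker_diff_ge:
  assumes "0 \<le> \<alpha>" "\<alpha> < 1/2" "a \<le> b"
  shows "-8 * (b - a) \<le> hker \<alpha> b - hker \<alpha> a"
proof -
  define h' where "h' y = (if sin y = 0 then -8
      else ang_abs y powr (- 2 * \<alpha>) * (cos y - 2 * \<alpha> * \<bar>sin y\<bar> / ang_abs y))" for y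
  have "{y \<in> {a..b}. sin y = 0} \<subseteq> (\<lambda>i. of_int i * pi) ` {floor (a/pi)..ceiling (b/pi)}"
  proof
    fix y assume "y \<in> {y \<in> {a..b}. sin y = 0}"
    then obtain i :: int where i: "y = of_int i * pi" "a \<le> y" "y \<le> b"
      using sin_zero_iff_int2 by auto
    hence "a/pi \<le> i" "i \<le> b/pi" by (auto simp: field_simps)
    hence "i \<in> {floor (a/pi)..ceiling (b/pi)}" by (simp add: floor_le_iff le_ceiling_iff)
    thus "y \<in> (\<lambda>i. of_int i * pi) ` {floor (a/pi)..ceiling (b/pi)}" using i by auto
  qed
  hence "finite {y \<in> {a..b}. sin y = 0}" by (rule finite_subset) auto
  \<comment> \<open>at these finitely many points \<open>hker \<alpha>\<close> is only continuous, which the fundamental theorem of calculus tolerates\<close>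
  hence FTC: "(h' has_integral (hker \<alpha> b - hker \<alpha> a)) {a..b}"
  proof (rule fundamental_theorem_of_calculus_interior_strong[OF _ assms(3)])
    show "continuous_on {a..b} (hker \<alpha>)"
      using continuous_hker[OF assms(2)] by (rule continuous_on_subset) auto
    fix y assume "y \<in> {a<..<b} - {y \<in> {a..b}. sin y = 0}"
    hence "sin y \<noteq> 0" by auto
    thus "(hker \<alpha> has_vector_derivative h' y) (at y)"
      using has_real_derivative_hker[of y \<alpha>]
      by (simp add: h'_def flip: has_real_derivative_iff_has_vector_derivative)
  qed
  have "((\<lambda>y. -8) has_integral (-8 * (b - a))) {a..b}"
    using has_integral_const_real[of "-8 :: real" a b] assms(3) by (simp add: mult.commute)
  thus ?thesis
    by (rule has_integral_le[OF _ FTC]) (use hker_derivative_ge[of \<alpha>] assms in \<open>simp add: h'_def\<close>)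
qed

lemma hker_diff_mult_ge:
  assumes "0 \<le> \<alpha>" "\<alpha> < 1/2"
  shows "-8 * r\<^sup>2 \<le> r * (hker \<alpha> u - hker \<alpha> (u - r))"
proof (cases "0 \<le> r")
  case True
  hence "r * (-8 * r) \<le> r * (hker \<alpha> u - hker \<alpha> (u - r))"
    using hker_diff_ge[OF assms, of "u - r" u] by (intro mult_left_mono) auto
  thus ?thesis by (simp add: power2_eq_square)
next
  case False
  hence "r * (-8 * r) \<le> r * (hker \<alpha> u - hker \<alpha> (u - r))"
    using hker_diff_ge[OF assms, of u "u - r"] by (intro mult_left_mono_neg) auto
  thus ?thesis by (simp add: power2_eq_square)
qed

lemma integrable_hker:
  assumes "0 \<le> \<alpha>" "\<alpha> < 1/2" "sets N = sets (borel :: (real \<times> real) measure)" "finite_measure N"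
  shows "integrable N (\<lambda>y. hker \<alpha> (u - fst y))"
proof (rule finite_measure.integrable_const_bound[OF assms(4)])
  have "(\<lambda>y. hker \<alpha> (u - fst y)) \<in> borel_measurable borel"
    by (intro borel_measurable_continuous_onI continuous_on_compose2[OF continuous_hker[OF assms(2)]]
        continuous_intros) auto
  thus "(\<lambda>y. hker \<alpha> (u - fst y)) \<in> borel_measurable N"
    by (simp add: measurable_cong_sets[OF assms(3) refl])
  show "AE y in N. norm (hker \<alpha> (u - fst y)) \<le> 4"
    using abs_hker_le_4 assms by simp
qed

lemma hker_integral_diff_mult_ge:
  assumes "0 \<le> \<alpha>" "\<alpha> < 1/2" "sets N = sets (borel :: (real \<times> real) measure)" "finite_measure N"
  shows "-8 * measure N (space N) * r\<^sup>2 \<le>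
    r * ((\<integral>y. hker \<alpha> (u - fst y) \<partial>N) - (\<integral>y. hker \<alpha> (u - r + 2 * pi * of_int m - fst y) \<partial>N))"
proof -
  have "(\<integral>y. hker \<alpha> (u - r + 2 * pi * of_int m - fst y) \<partial>N) = (\<integral>y. hker \<alpha> (u - r - fst y) \<partial>N)"
  proof (rule Bochner_Integration.integral_cong[OF refl])
    fix y
    show "hker \<alpha> (u - r + 2 * pi * of_int m - fst y) = hker \<alpha> (u - r - fst y)"
      using hker_periodic[of \<alpha> "u - r - fst y" m] by (simp add: algebra_simps)
  qed
  hence "r * ((\<integral>y. hker \<alpha> (u - fst y) \<partial>N) - (\<integral>y. hker \<alpha> (u - r + 2 * pi * of_int m - fst y) \<partial>N))
      = (\<integral>y. r * (hker \<alpha> (u - fst y) - hker \<alpha> (u - r - fst y)) \<partial>N)"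
    using integrable_hker[OF assms] by (simp add: integral_diff)
  also have "\<dots> \<ge> (\<integral>y. -8 * r\<^sup>2 \<partial>N)"
  proof (rule integral_mono)
    fix y
    show "-8 * r\<^sup>2 \<le> r * (hker \<alpha> (u - fst y) - hker \<alpha> (u - r - fst y))"
      using hker_diff_mult_ge[OF assms(1,2), of r "u - fst y"] by (simp add: algebra_simps)
  qed (use integrable_hker[OF assms] finite_measure.integrable_const[OF assms(4)] in auto)
  finally show ?thesis by (simp add: mult_ac)
qed

section \<open>Differential inequalities\<close>

lemma DERIV_within_nonpos_imp_decreasing:
  fixes f :: "real \<Rightarrow> real"
  assumes "\<And>s. s \<in> {a..b} \<Longrightarrow> (f has_real_derivative f' s) (at s within {a..b})"
    and "\<And>s. s \<in> {a..b} \<Longrightarrow> f' s \<le> 0"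
    and "t \<in> {a..b}"
  shows "f t \<le> f a"
proof (rule DERIV_nonpos_imp_decreasing_open[of a t f])
  show "a \<le> t" using assms(3) by simp
  have "continuous_on {a..b} f"
    using assms(1) by (meson DERIV_continuous continuous_on_eq_continuous_within)
  thus "continuous_on {a..t} f" by (rule continuous_on_subset) (use assms(3) in auto)
  fix s assume "a < s" "s < t"
  hence "(f has_real_derivative f' s) (at s)"
    using assms(1)[of s] assms(3) at_within_Icc_at[of a s b] by auto
  thus "\<exists>y. (f has_real_derivative y) (at s) \<and> y \<le> 0"
    using assms(2)[of s] \<open>a < s\<close> \<open>s < t\<close> assms(3) by auto
qed

lemma gronwall_differential:
  fixes p :: "real \<Rightarrow> real"
  assumes "\<And>s. s \<in> {a..b} \<Longrightarrow> (p has_real_derivative p' s) (at s within {a..b})"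
    and "\<And>s. s \<in> {a..b} \<Longrightarrow> p' s \<le> c * p s"
    and "t \<in> {a..b}"
  shows "p t \<le> p a * exp (c * (t - a))"
proof -
  define q where "q s = p s * exp (- c * (s - a))" for s
  have "q t \<le> q a"
  proof (rule DERIV_within_nonpos_imp_decreasing[OF _ _ assms(3)])
    fix s assume s: "s \<in> {a..b}"
    show "(q has_real_derivative (p' s - c * p s) * exp (- c * (s - a))) (at s within {a..b})"
      unfolding q_def using assms(1)[OF s] by (auto intro!: derivative_eq_intros simp: algebra_simps)
    show "(p' s - c * p s) * exp (- c * (s - a)) \<le> 0"
      using assms(2)[OF s] by (simp add: mult_nonpos_nonneg)
  qed
  hence "p t * exp (- c * (t - a)) * exp (c * (t - a)) \<le> p a * exp (c * (t - a))"
    unfolding q_def by (simp add: mult_right_mono)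
  thus ?thesis by (simp add: mult.assoc exp_add[symmetric])
qed

section \<open>The flow\<close>

lemma dTR_eq_ang_rep: "dTR p q = sqrt ((ang_rep (fst p - fst q))\<^sup>2 + (snd p - snd q)\<^sup>2)"
  by (simp add: dTR_def ang_abs_def)

lemma dTR_le_shift: "dTR p q \<le> sqrt ((fst p - fst q + 2 * pi * of_int m)\<^sup>2 + (snd p - snd q)\<^sup>2)"
proof -
  have "ang_abs (fst p - fst q) \<le> \<bar>fst p - fst q + 2 * pi * of_int m\<bar>"
    using ang_abs_le_abs ang_abs_periodic by metis
  hence "(ang_abs (fst p - fst q))\<^sup>2 \<le> (fst p - fst q + 2 * pi * of_int m)\<^sup>2"
    by (metis abs_ge_zero ang_abs_def power2_abs power_mono)
  thus ?thesis by (simp add: dTR_def)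
qed

lemma has_vector_derivative_fst:
  "(f has_vector_derivative D) F \<Longrightarrow> ((\<lambda>s. fst (f s)) has_vector_derivative fst D) F"
  unfolding has_vector_derivative_def by (drule has_derivative_fst) (simp add: fst_scaleR)

lemma has_vector_derivative_snd:
  "(f has_vector_derivative D) F \<Longrightarrow> ((\<lambda>s. snd (f s)) has_vector_derivative snd D) F"
  unfolding has_vector_derivative_def by (drule has_derivative_snd) (simp add: snd_scaleR)

lemma is_flow_derivative:
  assumes "is_flow \<alpha> K T \<mu> X" "s \<in> {0..T}"
  shows "((\<lambda>s. fst (X s x)) has_real_derivative Pfield \<alpha> K (\<mu> s) (X s x)) (at s within {0..T})"
    and "((\<lambda>s. snd (X s x)) has_real_derivative 0) (at s within {0..T})"
proof -
  have "((\<lambda>s. X s x) has_vector_derivative (Pfield \<alpha> K (\<mu> s) (X s x), 0)) (at s within {0..T})"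
    using assms unfolding is_flow_def Vfield_def by blast
  from has_vector_derivative_fst[OF this] has_vector_derivative_snd[OF this]
  show "((\<lambda>s. fst (X s x)) has_real_derivative Pfield \<alpha> K (\<mu> s) (X s x)) (at s within {0..T})"
    and "((\<lambda>s. snd (X s x)) has_real_derivative 0) (at s within {0..T})"
    by (simp_all add: has_real_derivative_iff_has_vector_derivative)
qed

lemma is_flow_snd:
  assumes "is_flow \<alpha> K T \<mu> X" "t \<in> {0..T}"
  shows "snd (X t x) = snd x"
proof -
  obtain c where "\<forall>s\<in>{0..T}. snd (X s x) = c"
    using has_field_derivative_zero_constant[OF convex_real_interval(5) is_flow_derivative(2)[OF assms(1)]]
    by blast
  moreover have "0 \<in> {0..T}" using assms(2) by simp
  moreover have "X 0 x = x" using assms(1) unfolding is_flow_def by blast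
  ultimately show ?thesis using assms(2) by metis
qed

lemma Pfield_diff_mult_le:
  assumes "0 \<le> \<alpha>" "\<alpha> < 1/2" "0 \<le> K"
    and N: "sets N = sets (borel :: (real \<times> real) measure)" "finite_measure N"
    and M: "measure N (space N) \<le> M"
    and q: "fst q = fst p - r + 2 * pi * of_int m"
  shows "2 * r * (Pfield \<alpha> K N p - Pfield \<alpha> K N q) \<le> (1 + 16 * K * M) * (r\<^sup>2 + (snd p - snd q)\<^sup>2)"
proof -
  define D where "D = (\<integral>y. hker \<alpha> (fst p - fst y) \<partial>N) - (\<integral>y. hker \<alpha> (fst q - fst y) \<partial>N)"
  have "0 \<le> M" using M measure_nonneg order_trans by blast
  have "-8 * measure N (space N) * r\<^sup>2 \<le> r * D"
    using hker_integral_diff_mult_ge[OF assms(1,2) N, of r "fst p" m] by (simp add: D_def q)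
  hence "-8 * M * r\<^sup>2 \<le> r * D"
    using mult_right_mono[OF M, of "r\<^sup>2"] by fastforce
  hence "K * (-8 * M * r\<^sup>2) \<le> K * (r * D)"
    using \<open>0 \<le> K\<close> by (rule mult_left_mono)
  moreover have "2 * r * (snd p - snd q) \<le> r\<^sup>2 + (snd p - snd q)\<^sup>2"
    using sum_squares_bound[of r "snd p - snd q"] by (simp add: algebra_simps)
  moreover have "16 * K * M * r\<^sup>2 \<le> 16 * K * M * (r\<^sup>2 + (snd p - snd q)\<^sup>2)"
    using \<open>0 \<le> K\<close> \<open>0 \<le> M\<close> by (intro mult_left_mono) auto
  ultimately show ?thesis
    by (simp add: Pfield_def D_def algebra_simps)
qed

lemma is_flow_dTR_le:
  assumes "0 \<le> \<alpha>" "\<alpha> < 1/2" "0 \<le> K" and flow: "is_flow \<alpha> K T \<mu> X"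
    and \<mu>: "\<And>s. s \<in> {0..T} \<Longrightarrow>
      sets (\<mu> s) = sets borel \<and> finite_measure (\<mu> s) \<and> measure (\<mu> s) UNIV \<le> M"
    and t: "t \<in> {0..T}"
  shows "dTR (X t x1) (X t x2) \<le> dTR x1 x2 * exp ((1 + 16 * K * M) / 2 * t)"
proof -
  define c where "c = 1 + 16 * K * M"
  obtain m :: int where m: "ang_rep (fst x1 - fst x2) = fst x1 - fst x2 + 2 * pi * of_int m"
    using ang_rep_shift by blast
  \<comment> \<open>a lift of the angular gap that is its representative in \<open>(-pi, pi]\<close> at time 0\<close>
  define r where "r s = fst (X s x1) - fst (X s x2) + 2 * pi * of_int m" for s
  define p where "p s = (r s)\<^sup>2 + (snd x1 - snd x2)\<^sup>2" for s
  have p_deriv: "(p has_real_derivative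
      2 * r s * (Pfield \<alpha> K (\<mu> s) (X s x1) - Pfield \<alpha> K (\<mu> s) (X s x2))) (at s within {0..T})"
    if s: "s \<in> {0..T}" for s
    unfolding p_def r_def
    using is_flow_derivative(1)[OF flow s, where x = x1] is_flow_derivative(1)[OF flow s, where x = x2]
    by (auto intro!: derivative_eq_intros simp: algebra_simps)
  have p_deriv_le: "2 * r s * (Pfield \<alpha> K (\<mu> s) (X s x1) - Pfield \<alpha> K (\<mu> s) (X s x2)) \<le> c * p s"
    if s: "s \<in> {0..T}" for s
    using Pfield_diff_mult_le[OF assms(1-3), of "\<mu> s" M "X s x2" "X s x1" "r s" m] \<mu>[OF s]
      sets_eq_imp_space_eq[of "\<mu> s" borel] is_flow_snd[OF flow s]
    by (simp add: c_def p_def r_def)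
  have "X 0 x = x" for x using flow unfolding is_flow_def by blast
  hence p0: "p 0 = (dTR x1 x2)\<^sup>2" by (simp add: p_def r_def dTR_eq_ang_rep m)
  have "dTR (X t x1) (X t x2) \<le> sqrt (p t)"
    using dTR_le_shift[of "X t x1" "X t x2" m] is_flow_snd[OF flow t] by (simp add: p_def r_def)
  also have "\<dots> \<le> sqrt (p 0 * exp (c * t))"
    using gronwall_differential[OF p_deriv p_deriv_le t] by simp
  also have "\<dots> = dTR x1 x2 * exp (c / 2 * t)"
  proof -
    have "exp (c * t) = (exp (c / 2 * t))\<^sup>2" by (simp add: power2_eq_square flip: exp_add)
    thus ?thesis by (simp add: p0 real_sqrt_mult dTR_def)
  qed
  finally show ?thesis by (simp add: c_def)
qed

theorem mainTheorem15:
  fixes \<alpha> K T :: real and \<mu> :: "real \<Rightarrow> (real \<times> real) measure"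
  assumes "0 < \<alpha>" "\<alpha> < 1/2" "0 < K" "0 < T"
    and "CM_tilde T \<mu>"
  shows "\<exists>L. \<forall>X. is_flow \<alpha> K T \<mu> X \<longrightarrow>
           (\<forall>x1 x2 t. fst x1 \<in> {-pi<..pi} \<longrightarrow> fst x2 \<in> {-pi<..pi} \<longrightarrow> t \<in> {0..T} \<longrightarrow>
              dTR (X t x1) (X t x2) \<le> dTR x1 x2 * exp (L * t))"
proof -
  obtain M where "\<And>s. s \<in> {0..T} \<Longrightarrow>
      sets (\<mu> s) = sets borel \<and> finite_measure (\<mu> s) \<and> measure (\<mu> s) UNIV \<le> M"
    using assms(5) unfolding CM_tilde_def meas_TR_def by blast
  thus ?thesis
    using is_flow_dTR_le[of \<alpha> K T \<mu>] assms(1-3) by (intro exI[of _ "(1 + 16 * K * M) / 2"]) auto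
qed

end
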